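(* Let $T$ be an Aronszajn tree. Then $\diamondsuit$ implies $\lnot\sigma\mathsf{U}_T$; that is, there is a ladder system coloring which is not $\sigma$-$T$-uniformizable.
   Context: A ladder system is $\vec l=\langle l_\alpha:\alpha\in\omega_1\cap\mathrm{Lim}\rangle$ with each $l_\alpha\subseteq\alpha$ cofinal in $\alpha$ of order type $\omega$; $l_{\alpha,n}$ is its $n$-th element. A ladder system coloring is $\langle\vec l,\vec c\rangle$ with $\vec c=\langle c_\alpha:l_\alpha\to\omega\rangle$. For a tree $T$ of height $\omega_1$, $T_\alpha$ is its $\alpha$-th level, $T\restriction\mathrm{Lim}=\bigcup_{\alpha\in\mathrm{Lim}}T_\alpha$, and $t\restriction\gamma$ is the predecessor of $t$ on level $\gamma$. $\langle\vec l,\vec c\rangle$ is $\sigma$-$T$-uniformizable if there are a decomposition $T\restriction\mathrm{Lim}=\bigcup_{n<\omega}A_n$ and $f:T\restriction\mathrm{Lim}\to\omega$ such that for each $n$ the set $\{\langle t\restriction l_{\alpha,k},c_\alpha(l_{\alpha,k})\rangle:\alpha\in\mathrm{Lim},\ t\in A_n\cap T_\alpha,\ k\ge f(t)\}$ is a function. *)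

theory Defs
  imports "HOL-Library.Countable_Set"
begin

text \<open>Countable ordinals are modelled by a well-ordered type 'o which is
  omega_1-like: uncountable, with all proper initial segments countable.\<close>

definition omega1_like :: "'o::wellorder itself \<Rightarrow> bool" where
  "omega1_like _ \<longleftrightarrow> uncountable (UNIV :: 'o set) \<and> (\<forall>a::'o. countable {..<a})"

definition is_limit :: "'o::wellorder \<Rightarrow> bool" where
  "is_limit a \<longleftrightarrow> (\<exists>b. b < a) \<and> (\<forall>b<a. \<exists>c. b < c \<and> c < a)"

definition club :: "'o::wellorder set \<Rightarrow> bool" where
  "club C \<longleftrightarrow> (\<forall>a. \<exists>b\<in>C. a < b) \<and>
     (\<forall>a. is_limit a \<and> (\<forall>b<a. \<exists>c\<in>C. b < c \<and> c < a) \<longrightarrow> a \<in> C)"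

definition stationary :: "'o::wellorder set \<Rightarrow> bool" where
  "stationary S \<longleftrightarrow> (\<forall>C. club C \<longrightarrow> S \<inter> C \<noteq> {})"

definition diamond :: "'o::wellorder itself \<Rightarrow> bool" where
  "diamond _ \<longleftrightarrow> (\<exists>A :: 'o \<Rightarrow> 'o set. (\<forall>a. A a \<subseteq> {..<a}) \<and>
     (\<forall>X :: 'o set. stationary {a. X \<inter> {..<a} = A a}))"

definition preds :: "'n set \<Rightarrow> ('n \<Rightarrow> 'n \<Rightarrow> bool) \<Rightarrow> 'n \<Rightarrow> 'n set" where
  "preds T lt t = {s\<in>T. lt s t}"

definition has_height :: "'n set \<Rightarrow> ('n \<Rightarrow> 'n \<Rightarrow> bool) \<Rightarrow> 'n \<Rightarrow> 'o::wellorder \<Rightarrow> bool" where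
  "has_height T lt t a \<longleftrightarrow> (\<exists>f. bij_betw f (preds T lt t) {..<a} \<and>
      (\<forall>s\<in>preds T lt t. \<forall>s'\<in>preds T lt t. lt s s' \<longleftrightarrow> f s < f s'))"

definition level :: "'n set \<Rightarrow> ('n \<Rightarrow> 'n \<Rightarrow> bool) \<Rightarrow> 'o::wellorder \<Rightarrow> 'n set" where
  "level T lt a = {t\<in>T. has_height T lt t a}"

definition height :: "'n set \<Rightarrow> ('n \<Rightarrow> 'n \<Rightarrow> bool) \<Rightarrow> 'n \<Rightarrow> 'o::wellorder" where
  "height T lt t = (THE a. has_height T lt t a)"

definition omega1_tree :: "'n set \<Rightarrow> ('n \<Rightarrow> 'n \<Rightarrow> bool) \<Rightarrow> 'o::wellorder itself \<Rightarrow> bool" where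
  "omega1_tree T lt _ \<longleftrightarrow>
     (\<forall>t\<in>T. \<not> lt t t) \<and>
     (\<forall>s\<in>T. \<forall>t\<in>T. \<forall>u\<in>T. lt s t \<and> lt t u \<longrightarrow> lt s u) \<and>
     (\<forall>t\<in>T. \<forall>s\<in>preds T lt t. \<forall>s'\<in>preds T lt t. lt s s' \<or> s = s' \<or> lt s' s) \<and>
     (\<forall>t\<in>T. \<exists>a::'o. has_height T lt t a) \<and>
     (\<forall>a::'o. level T lt a \<noteq> {})"

definition aronszajn :: "'n set \<Rightarrow> ('n \<Rightarrow> 'n \<Rightarrow> bool) \<Rightarrow> 'o::wellorder itself \<Rightarrow> bool" where
  "aronszajn T lt ty \<longleftrightarrow> omega1_tree T lt ty \<and>
     (\<forall>a::'o. countable (level T lt a)) \<and>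
     \<not> (\<exists>B\<subseteq>T. (\<forall>s\<in>B. \<forall>t\<in>B. lt s t \<or> s = t \<or> lt t s) \<and>
            (\<forall>a::'o. B \<inter> level T lt a \<noteq> {}))"

definition restr :: "'n set \<Rightarrow> ('n \<Rightarrow> 'n \<Rightarrow> bool) \<Rightarrow> 'n \<Rightarrow> 'o::wellorder \<Rightarrow> 'n" where
  "restr T lt t g = (THE s. s \<in> level T lt g \<and> (s = t \<or> lt s t))"

definition ladder_system :: "('o::wellorder \<Rightarrow> nat \<Rightarrow> 'o) \<Rightarrow> bool" where
  "ladder_system l \<longleftrightarrow> (\<forall>a. is_limit a \<longrightarrow>
     strict_mono (l a) \<and> (\<forall>n. l a n < a) \<and> (\<forall>b<a. \<exists>n. b < l a n))"

text \<open>Colouring c a : l_a \<rightarrow> omega (only values on the range of l a matter).\<close>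
definition sigma_T_uniformizable ::
  "'n set \<Rightarrow> ('n \<Rightarrow> 'n \<Rightarrow> bool) \<Rightarrow> ('o::wellorder \<Rightarrow> nat \<Rightarrow> 'o) \<Rightarrow> ('o \<Rightarrow> 'o \<Rightarrow> nat) \<Rightarrow> bool" where
  "sigma_T_uniformizable T lt l c \<longleftrightarrow>
     (\<exists>(A :: nat \<Rightarrow> 'n set) (f :: 'n \<Rightarrow> nat).
        (\<Union>n. A n) = (\<Union>a\<in>{a::'o. is_limit a}. level T lt a) \<and>
        (\<forall>n. single_valued
           {(restr T lt t (l a k), c a (l a k)) | (a::'o) t k.
              is_limit a \<and> t \<in> A n \<inter> level T lt a \<and> f t \<le> k}))"

end

theory Submission
  imports Defs
begin

(* A diamond sequence (A a) guesses every subset of omega_1 on a stationary set.  Code the triples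
   (n, s, v) -- n the index of a piece of a decomposition, s a node, v a colour -- injectively by
   countable ordinals; then A a predicts for each pair (n, s) a colour v with code (n, s, v) in A a.
   As level a times omega is countable, c_a can be chosen by diagonalisation so that, for every t on
   level a and every n, it eventually differs along the ladder l_a from the prediction for
   (n, t restricted to l_a(k)).  If (P_n, f) uniformized c by functions F_n, let X code the union of
   their graphs.  At a limit a that is closed under the coding and has X below a equal to A a, the
   prediction for (n, t restricted to l_a(k)), with t on level a in P_n and k large, is F_n's value
   c_a(l_a(k)): a contradiction. *)

unbundle cardinal_syntax

lemma strict_mono_on_lessThan_ge:
  fixes h :: "'o::wellorder \<Rightarrow> 'o"
  assumes mono: "strict_mono_on {..<b} h" and "x < b"
  shows "x \<le> h x"
  using \<open>x < b\<close>
proof (induction x rule: less_induct)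
  case (less x)
  show ?case
  proof (rule ccontr)
    assume "\<not> x \<le> h x"
    then have hx: "h x < x" by simp
    then have "h (h x) < h x" using mono less.prems by (auto simp: strict_mono_on_def)
    moreover have "h x \<le> h (h x)" using less.IH hx less.prems by auto
    ultimately show False by simp
  qed
qed

lemma strict_mono_on_lessThan_le:
  fixes h :: "'o::wellorder \<Rightarrow> 'o"
  assumes "strict_mono_on {..<b} h" and "h ` {..<b} \<subseteq> {..<a}"
  shows "b \<le> a"
proof (rule ccontr)
  assume "\<not> b \<le> a"
  then have "a < b" by simp
  then have "a \<le> h a" using strict_mono_on_lessThan_ge assms(1) by blast
  moreover have "h a < a" using assms(2) \<open>a < b\<close> by auto
  ultimately show False by simp
qed

lemma has_height_le:
  assumes "has_height T lt t (a::'o::wellorder)" and "has_height T lt t b"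
  shows "b \<le> a"
proof -
  let ?P = "preds T lt t"
  obtain f g where f: "bij_betw f ?P {..<a}" "\<forall>s\<in>?P. \<forall>s'\<in>?P. lt s s' \<longleftrightarrow> f s < f s'"
    and g: "bij_betw g ?P {..<b}" "\<forall>s\<in>?P. \<forall>s'\<in>?P. lt s s' \<longleftrightarrow> g s < g s'"
    using assms unfolding has_height_def by blast
  have inv: "inv_into ?P g x \<in> ?P \<and> g (inv_into ?P g x) = x" if "x < b" for x
    using g(1) that by (metis bij_betw_def f_inv_into_f inv_into_into lessThan_iff)
  have "strict_mono_on {..<b} (f \<circ> inv_into ?P g)"
    unfolding strict_mono_on_def using inv f(2) g(2) by (metis comp_apply lessThan_iff)
  moreover have "(f \<circ> inv_into ?P g) ` {..<b} \<subseteq> {..<a}"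
    using inv f(1) by (auto simp: bij_betw_def)
  ultimately show ?thesis by (rule strict_mono_on_lessThan_le)
qed

lemma has_height_unique:
  "has_height T lt t (a::'o::wellorder) \<Longrightarrow> has_height T lt t b \<Longrightarrow> a = b"
  using has_height_le[of T lt t a b] has_height_le[of T lt t b a] by simp

lemma has_height_pred:
  assumes trans: "\<forall>s\<in>T. \<forall>t\<in>T. \<forall>u\<in>T. lt s t \<and> lt t u \<longrightarrow> lt s u" and "t \<in> T"
    and f: "bij_betw f (preds T lt t) {..<(a::'o::wellorder)}"
    and f_iso: "\<forall>s\<in>preds T lt t. \<forall>s'\<in>preds T lt t. lt s s' \<longleftrightarrow> f s < f s'"
    and u: "u \<in> preds T lt t"
  shows "has_height T lt u (f u)"
proof -
  have "u \<in> T" "lt u t" using u by (auto simp: preds_def)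
  have preds_u: "preds T lt u = {x \<in> preds T lt t. f x < f u}"
  proof (intro equalityI subsetI)
    fix x assume "x \<in> preds T lt u"
    then have "x \<in> T" "lt x u" by (auto simp: preds_def)
    with trans \<open>u \<in> T\<close> \<open>lt u t\<close> \<open>t \<in> T\<close> have "lt x t" by blast
    with \<open>x \<in> T\<close> have "x \<in> preds T lt t" by (simp add: preds_def)
    with f_iso u \<open>lt x u\<close> show "x \<in> {x \<in> preds T lt t. f x < f u}" by blast
  next
    fix x assume "x \<in> {x \<in> preds T lt t. f x < f u}"
    with f_iso u show "x \<in> preds T lt u" by (auto simp: preds_def)
  qed
  have "f u < a" using f u by (auto simp: bij_betw_def)
  then have "{..<f u} \<subseteq> f ` preds T lt t" using f by (auto simp: bij_betw_def)
  then have "f ` {x \<in> preds T lt t. f x < f u} = {..<f u}" by auto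
  then have "bij_betw f {x \<in> preds T lt t. f x < f u} {..<f u}"
    by (rule bij_betw_subset[OF f, rotated]) blast
  moreover have "\<forall>s\<in>{x \<in> preds T lt t. f x < f u}. \<forall>s'\<in>{x \<in> preds T lt t. f x < f u}.
      lt s s' \<longleftrightarrow> f s < f s'"
    using f_iso by blast
  ultimately show ?thesis unfolding has_height_def preds_u by blast
qed

lemma ex1_level_below:
  assumes tree: "omega1_tree T lt TYPE('o::wellorder)" and t: "t \<in> level T lt (a::'o)"
    and "b < a"
  shows "\<exists>!s. s \<in> level T lt b \<and> (s = t \<or> lt s t)"
proof -
  have trans: "\<forall>s\<in>T. \<forall>t\<in>T. \<forall>u\<in>T. lt s t \<and> lt t u \<longrightarrow> lt s u"
    using tree unfolding omega1_tree_def by blast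
  have "t \<in> T" and t_height: "has_height T lt t a" using t by (auto simp: level_def)
  then obtain f where f: "bij_betw f (preds T lt t) {..<a}"
    and f_iso: "\<forall>s\<in>preds T lt t. \<forall>s'\<in>preds T lt t. lt s s' \<longleftrightarrow> f s < f s'"
    unfolding has_height_def by blast
  have pred_height: "has_height T lt u (f u)" if "u \<in> preds T lt t" for u
    using has_height_pred[OF trans \<open>t \<in> T\<close> f f_iso that] .
  obtain s where s: "s \<in> preds T lt t" "f s = b"
    using f \<open>b < a\<close> by (metis bij_betw_imp_surj_on imageE lessThan_iff)
  then have s_level: "s \<in> level T lt b"
    using pred_height by (auto simp: level_def preds_def)
  show ?thesis
  proof (rule ex1I)
    show "s \<in> level T lt b \<and> (s = t \<or> lt s t)" using s_level s(1) by (simp add: preds_def)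
  next
    fix s' assume s': "s' \<in> level T lt b \<and> (s' = t \<or> lt s' t)"
    then have s'_height: "has_height T lt s' b" by (simp add: level_def)
    have "s' \<noteq> t" using s'_height t_height \<open>b < a\<close> has_height_unique by fastforce
    then have "s' \<in> preds T lt t" using s' by (simp add: level_def preds_def)
    then have "f s' = f s" using pred_height s'_height s(2) has_height_unique by metis
    then show "s' = s"
      using f s(1) \<open>s' \<in> preds T lt t\<close> by (metis bij_betw_def inj_onD)
  qed
qed

lemma restr_in_level:
  assumes "omega1_tree T lt TYPE('o::wellorder)" and "t \<in> level T lt (a::'o)" and "b < a"
  shows "restr T lt t b \<in> level T lt b"
  using theI'[OF ex1_level_below[OF assms]] unfolding restr_def by blast

lemma omega1_like_countable_atMost:
  "omega1_like TYPE('o::wellorder) \<Longrightarrow> countable {..x::'o}"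
  by (simp add: omega1_like_def atMost_def lessThan_def order_le_less Collect_disj_eq)

lemma omega1_like_countable_bounded:
  assumes o1: "omega1_like TYPE('o::wellorder)" and "countable (B :: 'o set)"
  shows "\<exists>x. \<forall>b\<in>B. b < x"
proof (rule ccontr)
  assume "\<nexists>x. \<forall>b\<in>B. b < x"
  then have "UNIV = (\<Union>b\<in>B. {..b})" by (auto simp: not_less)
  then have "countable (UNIV :: 'o set)"
    using \<open>countable B\<close> omega1_like_countable_atMost[OF o1] by (metis countable_UN)
  then show False using o1 by (simp add: omega1_like_def)
qed

lemma omega1_like_increasing_seq_limit:
  fixes g :: "nat \<Rightarrow> 'o::wellorder"
  assumes o1: "omega1_like TYPE('o)" and inc: "\<And>i. g i < g (Suc i)"
  shows "\<exists>c. is_limit c \<and> (\<forall>i. g i < c) \<and> (\<forall>b<c. \<exists>i. b < g i)"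
proof -
  obtain x where "\<forall>i. g i < x" using omega1_like_countable_bounded[OF o1, of "range g"] by auto
  define c where "c = (LEAST x. \<forall>i. g i < x)"
  have above: "g i < c" for i
    unfolding c_def by (rule LeastI2[of _ x]) (use \<open>\<forall>i. g i < x\<close> in auto)
  have below: "\<exists>i. b < g i" if "b < c" for b
  proof -
    obtain i where "b \<le> g i"
      using not_less_Least[OF \<open>b < c\<close>[unfolded c_def]] by (auto simp: not_less)
    then show ?thesis using inc order.strict_trans1 by blast
  qed
  have "is_limit c" unfolding is_limit_def using above below by blast
  then show ?thesis using above below by blast
qed

lemma club_closure_points:
  assumes o1: "omega1_like TYPE('o::wellorder)" and B: "\<And>d. countable (B d :: 'o set)"
  shows "club {c::'o. is_limit c \<and> (\<forall>d<c. \<forall>x\<in>B d. x < c)}" (is "club ?C")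
proof -
  have bound: "\<exists>y. x < y \<and> (\<forall>d\<le>x. \<forall>z\<in>B d. z < y)" for x :: 'o
  proof -
    have "countable (insert x (\<Union>d\<in>{..x}. B d))"
      using B omega1_like_countable_atMost[OF o1] by blast
    then obtain y where "\<forall>z\<in>insert x (\<Union>d\<in>{..x}. B d). z < y"
      using omega1_like_countable_bounded[OF o1] by blast
    then show ?thesis by auto
  qed
  define F where "F x = (SOME y. x < y \<and> (\<forall>d\<le>x. \<forall>z\<in>B d. z < y))" for x
  have F: "x < F x \<and> (\<forall>d\<le>x. \<forall>z\<in>B d. z < F x)" for x
    unfolding F_def by (rule someI_ex[OF bound])
  have unbounded: "\<exists>c\<in>?C. a < c" for a
  proof -
    have "(F ^^ i) a < (F ^^ Suc i) a" for i using F by simp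
    then obtain c where c: "is_limit c" "\<forall>i. (F ^^ i) a < c" "\<forall>d<c. \<exists>i. d < (F ^^ i) a"
      using omega1_like_increasing_seq_limit[OF o1, of "\<lambda>i. (F ^^ i) a"] by blast
    have "z < c" if "d < c" "z \<in> B d" for d z
    proof -
      obtain i where "d < (F ^^ i) a" using c(3) \<open>d < c\<close> by blast
      then have "z < F ((F ^^ i) a)" using F[of "(F ^^ i) a"] \<open>z \<in> B d\<close> less_imp_le by blast
      then have "z < (F ^^ Suc i) a" by simp
      then show ?thesis using c(2) order.strict_trans by blast
    qed
    moreover have "a < c" using c(2) by (metis funpow_0)
    ultimately show ?thesis using c(1) by blast
  qed
  have closed: "c \<in> ?C" if "is_limit c" and "\<forall>b<c. \<exists>c'\<in>?C. b < c' \<and> c' < c" for c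
  proof -
    have "x < c" if "d < c" "x \<in> B d" for d x
    proof -
      obtain c' where "c' \<in> ?C" "d < c'" "c' < c"
        using \<open>\<forall>b<c. \<exists>c'\<in>?C. b < c' \<and> c' < c\<close> \<open>d < c\<close> by blast
      then show ?thesis using \<open>x \<in> B d\<close> by (blast intro: order.strict_trans)
    qed
    then show ?thesis using \<open>is_limit c\<close> by blast
  qed
  show ?thesis unfolding club_def using unbounded closed by blast
qed

primrec standard_ladder :: "'o::wellorder \<Rightarrow> nat \<Rightarrow> 'o" where
  "standard_ladder a 0 = from_nat_into {..<a} 0"
| "standard_ladder a (Suc n) =
    (SOME c. max (standard_ladder a n) (from_nat_into {..<a} (Suc n)) < c \<and> c < a)"

lemma ladder_system_standard_ladder:
  assumes o1: "omega1_like TYPE('o::wellorder)"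
  shows "ladder_system (standard_ladder :: 'o \<Rightarrow> nat \<Rightarrow> 'o)"
  unfolding ladder_system_def
proof (intro allI impI)
  fix a :: 'o assume lim: "is_limit a"
  let ?e = "from_nat_into {..<a}" and ?l = "standard_ladder a"
  have "{..<a} \<noteq> {}" using lim by (auto simp: is_limit_def)
  then have e: "?e n < a" for n using from_nat_into by (metis lessThan_iff)
  have step: "max (?l n) (?e (Suc n)) < ?l (Suc n) \<and> ?l (Suc n) < a" if "?l n < a" for n
  proof -
    have "max (?l n) (?e (Suc n)) < a" using that e by simp
    then obtain c where "max (?l n) (?e (Suc n)) < c \<and> c < a"
      using lim unfolding is_limit_def by blast
    then show ?thesis unfolding standard_ladder.simps by (rule someI)
  qed
  have below: "?l n < a" for n
  proof (induction n)
    case 0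
    show ?case using e[of 0] by simp
  next
    case (Suc n)
    show ?case using step[OF Suc.IH] by (rule conjunct2)
  qed
  have mono: "strict_mono ?l" unfolding strict_mono_Suc_iff using step below by simp
  have e_le: "?e n \<le> ?l n" for n
  proof (cases n)
    case (Suc m)
    then show ?thesis using step[OF below[of m]] by (metis max.strict_boundedE less_imp_le)
  qed simp
  have "\<exists>n. b < ?l n" if "b < a" for b
  proof -
    obtain m where "?e m = b"
      using from_nat_into_surj[of "{..<a}" b] o1 \<open>b < a\<close> by (auto simp: omega1_like_def)
    then have "b < ?l (Suc m)" using e_le[of m] mono unfolding strict_mono_def
      by (metis lessI order.strict_trans1)
    then show ?thesis ..
  qed
  then show "strict_mono ?l \<and> (\<forall>n. ?l n < a) \<and> (\<forall>b<a. \<exists>n. b < ?l n)" using mono below by blast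
qed

lemma ex_inj_on_UN_countable:
  assumes inf: "infinite (UNIV :: 'o set)" and M: "\<And>i::'o. countable (M i)"
  shows "\<exists>code :: 'a \<Rightarrow> 'o. inj_on code (\<Union>i. M i)"
proof -
  have "|M i| \<le>o |UNIV :: nat set|" for i
    using M[of i] unfolding countable_def card_of_ordLeq[symmetric] by blast
  then have "|M i| \<le>o |UNIV :: 'o set|" for i
    using infinite_iff_card_of_nat inf ordLeq_transitive by blast
  then have "|\<Union>i. M i| \<le>o |UNIV :: 'o set|"
    using card_of_UNION_ordLeq_infinite[OF inf card_of_mono1[of UNIV UNIV]] by blast
  then show ?thesis unfolding card_of_ordLeq[symmetric] by blast
qed

lemma ex_inj_on_codes:
  assumes "omega1_like TYPE('o::wellorder)" and L: "\<And>a::'o. countable (L a)"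
  shows "\<exists>code :: (nat \<times> 'b) \<times> nat \<Rightarrow> 'o. inj_on code ((UNIV \<times> (\<Union>a. L a)) \<times> UNIV)"
proof -
  have "infinite (UNIV :: 'o set)" using assms(1) countable_finite by (auto simp: omega1_like_def)
  moreover have "countable (((UNIV :: nat set) \<times> L a) \<times> (UNIV :: nat set))" for a
    using L by (auto intro!: countable_SIGMA)
  ultimately obtain code :: "(nat \<times> 'b) \<times> nat \<Rightarrow> 'o"
    where "inj_on code (\<Union>a. (UNIV \<times> L a) \<times> UNIV)"
    using ex_inj_on_UN_countable[of "\<lambda>a. (UNIV \<times> L a) \<times> UNIV"] by blast
  then have "inj_on code ((UNIV \<times> (\<Union>a. L a)) \<times> UNIV)" by (rule inj_on_subset) blast
  then show ?thesis by blast
qed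

lemma ex_diagonal_avoiding:
  assumes "countable (W :: (nat \<Rightarrow> nat) set)"
  shows "\<exists>d. \<forall>w\<in>W. \<exists>j. \<forall>k\<ge>j. d k \<noteq> w k"
proof -
  define d where "d k = Suc (\<Sum>i\<le>k. from_nat_into W i k)" for k
  have "\<exists>j. \<forall>k\<ge>j. d k \<noteq> w k" if "w \<in> W" for w
  proof -
    obtain j where j: "from_nat_into W j = w" using from_nat_into_surj[OF assms \<open>w \<in> W\<close>] by blast
    have "w k < d k" if "j \<le> k" for k
    proof -
      have "w k \<le> (\<Sum>i\<le>k. from_nat_into W i k)"
        using member_le_sum[of j "{..k}" "\<lambda>i. from_nat_into W i k"] j that by simp
      then show ?thesis unfolding d_def by simp
    qed
    then show ?thesis by (metis less_irrefl)
  qed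
  then show ?thesis by blast
qed

lemma ex_coloring_avoiding:
  assumes "ladder_system (l :: 'o::wellorder \<Rightarrow> nat \<Rightarrow> 'o)" and "\<And>a. countable (W a)"
  shows "\<exists>c :: 'o \<Rightarrow> 'o \<Rightarrow> nat.
           \<forall>a. is_limit a \<longrightarrow> (\<forall>w\<in>W a. \<exists>j. \<forall>k\<ge>j. c a (l a k) \<noteq> w k)"
proof -
  obtain d where d: "\<forall>w\<in>W a. \<exists>j. \<forall>k\<ge>j. d a k \<noteq> w k" for a
    using ex_diagonal_avoiding[OF assms(2)] by metis
  have "inv (l a) (l a k) = k" if "is_limit a" for a k
    using assms(1) that by (simp add: ladder_system_def strict_mono_imp_inj_on)
  then have "\<forall>a. is_limit a \<longrightarrow> (\<forall>w\<in>W a. \<exists>j. \<forall>k\<ge>j. d a (inv (l a) (l a k)) \<noteq> w k)"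
    using d by simp
  then show ?thesis by (rule exI[where x = "\<lambda>a x. d a (inv (l a) x)"])
qed

lemma ex_coloring_avoiding_guesses:
  fixes g :: "'o::wellorder \<Rightarrow> nat \<times> 'n \<Rightarrow> nat"
  assumes "ladder_system (l :: 'o \<Rightarrow> nat \<Rightarrow> 'o)" and lev: "\<And>a::'o. countable (level T lt a)"
  shows "\<exists>c. \<forall>a t n. is_limit a \<longrightarrow> t \<in> level T lt a \<longrightarrow>
           (\<exists>j. \<forall>k\<ge>j. c a (l a k) \<noteq> g a (n, restr T lt t (l a k)))"
proof -
  define W where "W a = (\<lambda>(t, n) k. g a (n, restr T lt t (l a k))) ` (level T lt a \<times> UNIV)" for a
  obtain c where c: "\<forall>a. is_limit a \<longrightarrow> (\<forall>w\<in>W a. \<exists>j. \<forall>k\<ge>j. c a (l a k) \<noteq> w k)"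
    using ex_coloring_avoiding[OF assms(1), of W] lev unfolding W_def by blast
  have "(\<lambda>k. g a (n, restr T lt t (l a k))) \<in> W a" if "t \<in> level T lt a" for a t n
    unfolding W_def using that by force
  then show ?thesis using c by fastforce
qed

definition diamond_guess :: "('o \<Rightarrow> 'o set) \<Rightarrow> ('k \<times> nat \<Rightarrow> 'o) \<Rightarrow> 'o \<Rightarrow> 'k \<Rightarrow> nat" where
  "diamond_guess A code a key = (SOME v. code (key, v) \<in> A a)"

lemma diamond_guess_eq:
  assumes inj: "inj_on code (K \<times> UNIV)" and G: "G \<subseteq> K \<times> UNIV" "single_valued G"
    and A: "A a = code ` G \<inter> {..<a}" and kv: "(key, v) \<in> G" "code (key, v) < a"
  shows "diamond_guess A code a key = v"
proof -
  let ?g = "diamond_guess A code a key"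
  have "code (key, v) \<in> A a" using A kv by blast
  then have "code (key, ?g) \<in> A a" unfolding diamond_guess_def by (rule someI)
  then obtain p where "p \<in> G" "code (key, ?g) = code p" using A by blast
  moreover have "(key, ?g) \<in> K \<times> UNIV" using G(1) kv(1) by blast
  ultimately have "(key, ?g) \<in> G" using inj G(1) by (metis inj_onD subsetD)
  then show ?thesis using G(2) kv(1) unfolding single_valued_def by blast
qed

lemma not_sigma_T_uniformizable_if_avoids_guesses:
  fixes code :: "(nat \<times> 'n) \<times> nat \<Rightarrow> 'o::wellorder"
  assumes o1: "omega1_like TYPE('o)" and tree: "omega1_tree T lt TYPE('o)"
    and lev: "\<And>a::'o. countable (level T lt a)" and L: "ladder_system l"
    and inj: "inj_on code ((UNIV \<times> (\<Union>a::'o. level T lt a)) \<times> UNIV)"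
    and A: "\<And>X. stationary {a. X \<inter> {..<a} = A a}"
    and avoid: "\<forall>a t n. is_limit a \<longrightarrow> t \<in> level T lt a \<longrightarrow>
      (\<exists>j. \<forall>k\<ge>j. c a (l a k) \<noteq> diamond_guess A code a (n, restr T lt t (l a k)))"
  shows "\<not> sigma_T_uniformizable T lt l c"
proof
  assume "sigma_T_uniformizable T lt l c"
  then obtain P :: "nat \<Rightarrow> 'n set" and f :: "'n \<Rightarrow> nat"
    where cover: "(\<Union>n. P n) = (\<Union>a\<in>{a::'o. is_limit a}. level T lt a)"
      and sv: "\<And>n. single_valued {(restr T lt t (l a k), c a (l a k)) | (a::'o) t k.
                  is_limit a \<and> t \<in> P n \<inter> level T lt a \<and> f t \<le> k}"
    unfolding sigma_T_uniformizable_def by blast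
  define G where "G = {((n, restr T lt t (l a k)), c a (l a k)) | (a::'o) t k n.
                    is_limit a \<and> t \<in> P n \<inter> level T lt a \<and> f t \<le> k}"
  have "single_valued G"
  proof (rule single_valuedI)
    fix key v v' assume "(key, v) \<in> G" "(key, v') \<in> G"
    then show "v = v'" using sv[of "fst key"] unfolding G_def single_valued_def by fastforce
  qed
  have G_dom: "G \<subseteq> (UNIV \<times> (\<Union>a::'o. level T lt a)) \<times> UNIV"
    unfolding G_def using restr_in_level[OF tree] L by (fastforce simp: ladder_system_def)
  have "club {b. is_limit b \<and> (\<forall>d<b. \<forall>x\<in>code ` ((UNIV \<times> level T lt d) \<times> UNIV). x < b)}"
    by (rule club_closure_points[OF o1]) (use lev in blast)
  then obtain a where a: "code ` G \<inter> {..<a} = A a" "is_limit a"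
    and closed: "\<forall>d<a. \<forall>x\<in>code ` ((UNIV \<times> level T lt d) \<times> UNIV). x < a"
    using A[of "code ` G"] unfolding stationary_def by blast
  obtain t where t: "t \<in> level T lt a" using tree unfolding omega1_tree_def by blast
  then obtain n where "t \<in> P n" using cover a(2) by blast
  obtain j where j: "\<forall>k\<ge>j. c a (l a k) \<noteq> diamond_guess A code a (n, restr T lt t (l a k))"
    using avoid a(2) t by blast
  define k where "k = max j (f t)"
  define s where "s = restr T lt t (l a k)"
  have "l a k < a" using L a(2) by (simp add: ladder_system_def)
  then have "s \<in> level T lt (l a k)" unfolding s_def using restr_in_level[OF tree t] by blast
  then have "code ((n, s), c a (l a k)) < a" using closed \<open>l a k < a\<close> by blast
  moreover have "((n, s), c a (l a k)) \<in> G"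
    unfolding G_def s_def k_def using a(2) t \<open>t \<in> P n\<close> by fastforce
  ultimately have "diamond_guess A code a (n, s) = c a (l a k)"
    using diamond_guess_eq[where A = A and a = a, OF inj G_dom \<open>single_valued G\<close> a(1)[symmetric]]
    by blast
  moreover have "j \<le> k" unfolding k_def by simp
  ultimately show False using j unfolding s_def by metis
qed

theorem lemma4:
  fixes T :: "'n set" and lt :: "'n \<Rightarrow> 'n \<Rightarrow> bool"
  assumes "omega1_like TYPE('o::wellorder)"
    and "aronszajn T lt TYPE('o)"
    and "diamond TYPE('o)"
  shows "\<exists>(l :: 'o \<Rightarrow> nat \<Rightarrow> 'o) (c :: 'o \<Rightarrow> 'o \<Rightarrow> nat).
           ladder_system l \<and> \<not> sigma_T_uniformizable T lt l c"
proof -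
  have tree: "omega1_tree T lt TYPE('o)" and lev: "\<And>a::'o. countable (level T lt a)"
    using assms(2) unfolding aronszajn_def by auto
  obtain A :: "'o \<Rightarrow> 'o set" where A: "\<And>X. stationary {a. X \<inter> {..<a} = A a}"
    using assms(3) unfolding diamond_def by blast
  obtain code :: "(nat \<times> 'n) \<times> nat \<Rightarrow> 'o"
    where inj: "inj_on code ((UNIV \<times> (\<Union>a::'o. level T lt a)) \<times> UNIV)"
    using ex_inj_on_codes[where L = "level T lt", OF assms(1) lev] by blast
  let ?l = "standard_ladder :: 'o \<Rightarrow> nat \<Rightarrow> 'o"
  have L: "ladder_system ?l" by (rule ladder_system_standard_ladder[OF assms(1)])
  obtain c where "\<forall>a t n. is_limit a \<longrightarrow> t \<in> level T lt a \<longrightarrow>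
      (\<exists>j. \<forall>k\<ge>j. c a (?l a k) \<noteq> diamond_guess A code a (n, restr T lt t (?l a k)))"
    using ex_coloring_avoiding_guesses[OF L lev] by blast
  then have "\<not> sigma_T_uniformizable T lt ?l c"
    by (rule not_sigma_T_uniformizable_if_avoids_guesses[OF assms(1) tree lev L inj A])
  then show ?thesis using L by blast
qed
end
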